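(* The three-qubit CCZ gate $\mathrm{diag}(1,1,1,1,1,1,1,-1)$ can be emulated, without ancillae, by a three-qutrit circuit consisting of qutrit Clifford gates and $R$ gates with $R$-count $3$ (exactly three $R$ gates).
   Context: A qutrit is $\mathbb{C}^3$ with basis $\ket{0},\ket{1},\ket{2}$; $\omega=e^{2\pi i/3}$. Qutrit Clifford gates are those generated (up to global phase) by $S=\mathrm{diag}(1,1,\omega)$, $H=\frac{1}{\sqrt3}\begin{pmatrix}1&1&1\\1&\omega&\bar\omega\\1&\bar\omega&\omega\end{pmatrix}$ and $\mathrm{CX}:\ket{i,j}\mapsto\ket{i,(i+j)\bmod3}$. The qutrit reflection gate is $R=\mathrm{diag}(1,1,-1)$. A qutrit unitary $V$ on $n$ qutrits emulates an $n$-qubit unitary $U$ if, identifying qubit basis states $\ket{x}$, $x\in\{0,1\}^n$, with the equally labelled qutrit basis states, $V\ket{x}=U\ket{x}$ for all $x\in\{0,1\}^n$. *)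

theory Defs
  imports Complex_Main
begin

text \<open>Operators on three qutrits are
  represented by their matrix entries, indexed by basis states: A y x = <y|A|x>.\<close>

type_synonym op3 = "nat list \<Rightarrow> nat list \<Rightarrow> complex"

definition qutrit_basis3 :: "nat list set" where
  "qutrit_basis3 = {x. length x = 3 \<and> set x \<subseteq> {0,1,2}}"

definition qubit_basis3 :: "nat list set" where
  "qubit_basis3 = {x. length x = 3 \<and> set x \<subseteq> {0,1}}"

definition omega :: complex where
  "omega = cis (2 * pi / 3)"

definition S1 :: "nat \<Rightarrow> nat \<Rightarrow> complex" where
  "S1 i j = (if i = j then (if i = 2 then omega else 1) else 0)"

definition H1 :: "nat \<Rightarrow> nat \<Rightarrow> complex" where
  "H1 i j = omega ^ (i * j) / complex_of_real (sqrt 3)"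

definition R1 :: "nat \<Rightarrow> nat \<Rightarrow> complex" where
  "R1 i j = (if i = j then (if i = 2 then -1 else 1) else 0)"

definition on_qutrit :: "nat \<Rightarrow> (nat \<Rightarrow> nat \<Rightarrow> complex) \<Rightarrow> op3" where
  "on_qutrit k u = (\<lambda>y x. if (\<forall>j<3. j \<noteq> k \<longrightarrow> y ! j = x ! j) then u (y ! k) (x ! k) else 0)"

definition CX3 :: "nat \<Rightarrow> nat \<Rightarrow> op3" where
  "CX3 c t = (\<lambda>y x. if y = x[t := (x ! c + x ! t) mod 3] then 1 else 0)"

definition phase3 :: "complex \<Rightarrow> op3" where
  "phase3 z = (\<lambda>y x. if y = x then z else 0)"

definition id3 :: op3 where
  "id3 = (\<lambda>y x. if y = x then 1 else 0)"

definition mult3 :: "op3 \<Rightarrow> op3 \<Rightarrow> op3" where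
  "mult3 A B = (\<lambda>y x. \<Sum>z\<in>qutrit_basis3. A y z * B z x)"

text \<open>Gates: Clifford generators S, H on a qutrit, CX on an ordered pair of distinct
  qutrits, a global phase (Clifford gates are taken up to global phase), and the
  reflection gate R on a qutrit.\<close>
datatype gate = GS nat | GH nat | GCX nat nat | GPhase complex | GR nat

fun gate_ok :: "gate \<Rightarrow> bool" where
  "gate_ok (GS k) = (k < 3)"
| "gate_ok (GH k) = (k < 3)"
| "gate_ok (GCX c t) = (c < 3 \<and> t < 3 \<and> c \<noteq> t)"
| "gate_ok (GPhase z) = (cmod z = 1)"
| "gate_ok (GR k) = (k < 3)"

fun gate_op :: "gate \<Rightarrow> op3" where
  "gate_op (GS k) = on_qutrit k S1"
| "gate_op (GH k) = on_qutrit k H1"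
| "gate_op (GCX c t) = CX3 c t"
| "gate_op (GPhase z) = phase3 z"
| "gate_op (GR k) = on_qutrit k R1"

fun is_R :: "gate \<Rightarrow> bool" where
  "is_R (GR _) = True"
| "is_R _ = False"

text \<open>A circuit is a list of gates applied left to right (first gate acts first).\<close>
fun circuit_op :: "gate list \<Rightarrow> op3" where
  "circuit_op [] = id3"
| "circuit_op (g # gs) = mult3 (circuit_op gs) (gate_op g)"

definition R_count :: "gate list \<Rightarrow> nat" where
  "R_count gs = length (filter is_R gs)"

definition emulates3 :: "op3 \<Rightarrow> op3 \<Rightarrow> bool" where
  "emulates3 V U = (\<forall>x\<in>qubit_basis3. \<forall>y\<in>qutrit_basis3.
      V y x = (if y \<in> qubit_basis3 then U y x else 0))"

definition CCZ :: op3 where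
  "CCZ = (\<lambda>y x. if y = x then (if x = [1,1,1] then -1 else 1) else 0)"

end

theory Submission
  imports Defs
begin

text \<open>Two CX gates with control \<open>a\<close> add \<open>2 x\<^sub>a = -x\<^sub>a (mod 3)\<close> to qutrit \<open>t\<close>. So shifting
  qutrit \<open>t\<close> by \<open>-x\<^sub>a - x\<^sub>b\<close>, applying \<open>R\<close> to it and shifting back multiplies a basis state
  by \<open>-1\<close> exactly when \<open>x\<^sub>t - x\<^sub>a - x\<^sub>b = 2 (mod 3)\<close>, and leaves it otherwise unchanged. For
  bits this happens iff \<open>x\<^sub>t = 0, x\<^sub>a + x\<^sub>b = 1\<close> or \<open>x\<^sub>t = x\<^sub>a = x\<^sub>b = 1\<close>, so the product of
  the three signs obtained with \<open>t = 0, 1, 2\<close> is \<open>-1\<close> on \<open>|111>\<close> and \<open>+1\<close> on every other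
  qubit basis state: it is CCZ.\<close>

lemma finite_qutrit_basis3: "finite qutrit_basis3"
  by (rule finite_subset[OF _ finite_lists_length_eq[of "{0::nat,1,2}" 3]])
     (auto simp: qutrit_basis3_def)

lemma qutrit_basis3_update:
  assumes "x \<in> qutrit_basis3" "v < 3"
  shows "x[t := v] \<in> qutrit_basis3"
  using assms set_update_subset_insert[of x t v] unfolding qutrit_basis3_def by auto

lemma mult3_basis_column:
  assumes "x' \<in> qutrit_basis3" "\<forall>z\<in>qutrit_basis3. A z x = (if z = x' then c else 0)"
  shows "mult3 B A y x = B y x' * c"
proof -
  have "mult3 B A y x = (\<Sum>z\<in>qutrit_basis3. if z = x' then B y z * c else 0)"
    unfolding mult3_def using assms(2) by (intro sum.cong) auto
  also have "\<dots> = B y x' * c"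
    using assms(1) finite_qutrit_basis3 by (simp add: sum.delta')
  finally show ?thesis .
qed

lemma circuit_op_CX_Cons:
  assumes "x \<in> qutrit_basis3"
  shows "circuit_op (GCX c t # gs) y x = circuit_op gs y (x[t := (x ! c + x ! t) mod 3])"
  using mult3_basis_column[of "x[t := (x ! c + x ! t) mod 3]" "CX3 c t" x 1 "circuit_op gs" y]
  by (simp add: CX3_def qutrit_basis3_update[OF assms])

lemma on_qutrit_diagonal:
  assumes "x \<in> qutrit_basis3" "z \<in> qutrit_basis3" "\<And>i j. i \<noteq> j \<Longrightarrow> u i j = 0"
  shows "on_qutrit k u z x = (if z = x then u (x ! k) (x ! k) else 0)"
proof (cases "z \<noteq> x \<and> (\<forall>j<3. j \<noteq> k \<longrightarrow> z ! j = x ! j)")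
  case True
  have "length z = 3" "length x = 3"
    using assms(1,2) unfolding qutrit_basis3_def by auto
  with True have "z ! k \<noteq> x ! k"
    by (metis nth_equalityI)
  with True assms(3) show ?thesis
    by (simp add: on_qutrit_def)
qed (auto simp: on_qutrit_def)

lemma circuit_op_R_Cons:
  assumes "x \<in> qutrit_basis3"
  shows "circuit_op (GR k # gs) y x = circuit_op gs y x * R1 (x ! k) (x ! k)"
  using mult3_basis_column[OF assms, of "on_qutrit k R1" x "R1 (x ! k) (x ! k)"]
        on_qutrit_diagonal[OF assms, of _ R1 k]
  by (simp add: R1_def)

definition reflect_block :: "nat \<Rightarrow> nat \<Rightarrow> nat \<Rightarrow> gate list" where
  "reflect_block t a b = [GCX a t, GCX a t, GCX b t, GCX b t, GR t, GCX a t, GCX b t]"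

lemma circuit_op_reflect_block_append:
  assumes "x \<in> qutrit_basis3" "t < 3" "t \<noteq> a" "t \<noteq> b"
  shows "circuit_op (reflect_block t a b @ gs) y x =
    R1 ((x ! t + 2 * x ! a + 2 * x ! b) mod 3) ((x ! t + 2 * x ! a + 2 * x ! b) mod 3)
    * circuit_op gs y x"
proof -
  have "t < length x"
    using assms(1,2) by (simp add: qutrit_basis3_def)
  then have "x ! t \<in> set x"
    by (rule nth_mem)
  then have "x ! t < 3"
    using assms(1) by (auto simp: qutrit_basis3_def)
  have shifted: "(x ! b + (x ! b + (x ! a + (x ! a + x ! t) mod 3) mod 3) mod 3) mod 3
      = (x ! t + 2 * x ! a + 2 * x ! b) mod 3"
    by (simp add: mod_simps add_ac mult_2)
  have restored: "(x ! b + (x ! a + (x ! t + 2 * x ! a + 2 * x ! b) mod 3) mod 3) mod 3 = x ! t"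
    using \<open>x ! t < 3\<close> by presburger
  show ?thesis
    using assms \<open>t < length x\<close>
    by (simp del: circuit_op.simps(2) add: reflect_block_def circuit_op_CX_Cons
        circuit_op_R_Cons qutrit_basis3_update shifted restored)
qed

definition ccz_circuit :: "gate list" where
  "ccz_circuit = reflect_block 0 1 2 @ reflect_block 1 0 2 @ reflect_block 2 0 1"

lemma circuit_op_ccz_circuit:
  assumes "x \<in> qubit_basis3"
  shows "circuit_op ccz_circuit y x = CCZ y x"
proof -
  obtain a b c where x: "x = [a, b, c]" and bits: "a \<in> {0, 1}" "b \<in> {0, 1}" "c \<in> {0, 1}"
    using assms unfolding qubit_basis3_def by (auto simp: length_Suc_conv numeral_3_eq_3)
  then have "x \<in> qutrit_basis3"
    by (auto simp: qutrit_basis3_def)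
  \<comment> \<open>The trailing \<open>@ []\<close> lets the block lemma apply to the last block as well.\<close>
  then have "circuit_op (reflect_block 0 1 2 @ reflect_block 1 0 2 @ reflect_block 2 0 1 @ []) y x
      = R1 ((x ! 0 + 2 * x ! 1 + 2 * x ! 2) mod 3) ((x ! 0 + 2 * x ! 1 + 2 * x ! 2) mod 3)
      * (R1 ((x ! 1 + 2 * x ! 0 + 2 * x ! 2) mod 3) ((x ! 1 + 2 * x ! 0 + 2 * x ! 2) mod 3)
      * (R1 ((x ! 2 + 2 * x ! 0 + 2 * x ! 1) mod 3) ((x ! 2 + 2 * x ! 0 + 2 * x ! 1) mod 3)
      * id3 y x))"
    by (simp del: append_Nil2 add: circuit_op_reflect_block_append)
  then show ?thesis
    using bits unfolding ccz_circuit_def x by (auto simp: R1_def id3_def CCZ_def)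
qed

theorem mainTheorem6:
  shows "\<exists>gs. (\<forall>g\<in>set gs. gate_ok g) \<and> R_count gs = 3 \<and> emulates3 (circuit_op gs) CCZ"
proof (intro exI conjI)
  show "\<forall>g\<in>set ccz_circuit. gate_ok g"
    by (simp add: ccz_circuit_def reflect_block_def)
  show "R_count ccz_circuit = 3"
    by (simp add: ccz_circuit_def reflect_block_def R_count_def)
  show "emulates3 (circuit_op ccz_circuit) CCZ"
    by (auto simp: emulates3_def circuit_op_ccz_circuit CCZ_def)
qed

end
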